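(* In the setting of the context, the instanton operators $\mathsf p_{\mathbf d}$, $\mathbf d\in\Lambda$, commute and satisfy $\mathsf p_{\mathbf d}\mathsf p_{\mathbf d'}=\mathsf p_{\mathbf d+\mathbf d'}$ for all $\mathbf d,\mathbf d'\in\Lambda$; hence they form an abelian monoid isomorphic to $\Lambda$.
   Context: $Q=(Q^a_i)$ integer $r\times N$ matrix; $\mathcal K\subseteq\mathbb{R}^r$ a chamber (open connected set of regular values of the moment map $\mu^a(Z)=\sum_iQ^a_i|Z^i|^2$), $\mathcal K^\vee=\{\mathbf d:\sum_ad_at^a\ge0\ \forall\mathbf t\in\mathcal K\}$, $\Lambda=\mathcal K^\vee\cap\mathbb{Z}^r$ (a monoid under addition). $\mathcal D_i=\epsilon_i+\sum_aQ^a_i\partial/\partial t^a$ acting on functions of $\mathbf t\in\mathbb{R}^r$; Pochhammer $(z)_n=\Gamma(z+n)/\Gamma(z)$, i.e.\ $\prod_{j=0}^{n-1}(z+j)$ for $n>0$, $1$ for $n=0$, $\prod_{j=n}^{-1}(z+j)^{-1}$ for $n<0$. Instanton operators: $\mathsf p_{\mathbf d}=e^{-\lambda\sum_ad_at^a}\prod_{i=1}^N(\mathcal D_i/\lambda)_{-\sum_ad_aQ^a_i}$. *)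

theory Defs
  imports "HOL-Analysis.Analysis"
begin

text \<open>Index types: 'r indexes a = 1..r, 'n indexes i = 1..N.  The charge matrix is
  Q :: int^'n^'r with Q$a$i = Q^a_i.\<close>

definition moment_map :: "int^'n^'r \<Rightarrow> complex^'n \<Rightarrow> real^'r" where
  "moment_map Q Z = (\<chi> a. \<Sum>i\<in>UNIV. of_int (Q$a$i) * (cmod (Z$i))^2)"

definition regular_value :: "int^'n^'r \<Rightarrow> real^'r \<Rightarrow> bool" where
  "regular_value Q t \<longleftrightarrow>
     (\<forall>Z. moment_map Q Z = t \<longrightarrow>
        (\<exists>f'. (moment_map Q has_derivative f') (at Z) \<and> surj f'))"

definition chamber :: "int^'n^'r \<Rightarrow> (real^'r) set \<Rightarrow> bool" where
  "chamber Q K \<longleftrightarrow> open K \<and> connected K \<and> K \<noteq> {} \<and> (\<forall>t\<in>K. regular_value Q t)"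

definition Lambda :: "(real^'r) set \<Rightarrow> (int^'r) set" where
  "Lambda K = {d. \<forall>t\<in>K. (\<Sum>a\<in>UNIV. of_int (d$a) * t$a) \<ge> 0}"

definition poch :: "complex \<Rightarrow> int \<Rightarrow> complex" where
  "poch z n = (if n \<ge> 0 then pochhammer z (nat n)
               else inverse (pochhammer (z + of_int n) (nat (- n))))"

text \<open>Eigenvalue of D_i = eps_i + sum_a Q^a_i d/dt^a on the exponential
  e_s(t) = exp(sum_a s_a t_a), divided by lam.\<close>
definition Dsym :: "int^'n^'r \<Rightarrow> complex^'n \<Rightarrow> complex^'r \<Rightarrow> 'n \<Rightarrow> complex" where
  "Dsym Q eps s i = eps$i + (\<Sum>a\<in>UNIV. of_int (Q$a$i) * s$a)"

definition expo :: "complex^'r \<Rightarrow> real^'r \<Rightarrow> complex" where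
  "expo s t = exp (\<Sum>a\<in>UNIV. s$a * of_real (t$a))"

text \<open>Eigenvalue of prod_i (D_i/lam)_{-sum_a d_a Q^a_i} on e_s.\<close>
definition inst_coeff :: "int^'n^'r \<Rightarrow> complex^'n \<Rightarrow> complex \<Rightarrow> int^'r \<Rightarrow> complex^'r \<Rightarrow> complex" where
  "inst_coeff Q eps lam d s =
     (\<Prod>i\<in>UNIV. poch (Dsym Q eps s i / lam) (- (\<Sum>a\<in>UNIV. d$a * Q$a$i)))"

definition cvec :: "int^'r \<Rightarrow> complex^'r" where
  "cvec d = (\<chi> a. of_int (d$a))"

text \<open>Operators act on formal exponential sums  sum_s F(s) e_s(t),  represented by
  their coefficient function F.  Since
  p_d e_s = e^{-lam d.t} inst_coeff(s) e_s = inst_coeff(s) e_{s - lam d},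
  the coefficient of e_u in p_d(sum_s F(s) e_s) is inst_coeff(u + lam d) F(u + lam d).\<close>
definition inst_op :: "int^'n^'r \<Rightarrow> complex^'n \<Rightarrow> complex \<Rightarrow> int^'r
                        \<Rightarrow> (complex^'r \<Rightarrow> complex) \<Rightarrow> (complex^'r \<Rightarrow> complex)" where
  "inst_op Q eps lam d F = (\<lambda>u. inst_coeff Q eps lam d (u + (\<chi> a. lam * cvec d $ a))
                                * F (u + (\<chi> a. lam * cvec d $ a)))"

text \<open>Exponents s where no Pochhammer pole/zero can occur: D_i(s)/lam is not an integer
  whenever the i-th column of Q is nonzero (for zero columns the index is always 0).\<close>
definition generic_exponent :: "int^'n^'r \<Rightarrow> complex^'n \<Rightarrow> complex \<Rightarrow> complex^'r \<Rightarrow> bool" where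
  "generic_exponent Q eps lam s \<longleftrightarrow>
     (\<forall>i. (\<exists>a. Q$a$i \<noteq> 0) \<longrightarrow> (\<forall>k::int. Dsym Q eps s i / lam \<noteq> of_int k))"

definition generic_support :: "int^'n^'r \<Rightarrow> complex^'n \<Rightarrow> complex \<Rightarrow> (complex^'r \<Rightarrow> complex) \<Rightarrow> bool" where
  "generic_support Q eps lam F \<longleftrightarrow> (\<forall>s. F s \<noteq> 0 \<longrightarrow> generic_exponent Q eps lam s)"

end

theory Submission
  imports Defs
begin

(* On an exponential e_s the operator p_d acts as multiplication by a product of Pochhammer
   symbols followed by the shift s \<mapsto> s - lam d.  Composing two such operators therefore
   multiplies the coefficients, and the composition law is the Pochhammer cocycle
   (z)_m (z+m)_n = (z)_(m+n), which holds off the integers because there (z)_n is the Gamma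
   quotient Gamma(z+n)/Gamma(z).  Injectivity holds because the shift vectors lam d are
   pairwise distinct and the coefficient of p_d does not vanish identically: it is nonzero
   as soon as every D_i/lam has nonzero imaginary part, which only excludes finitely many
   real hyperplanes. *)

lemma ex_avoid_hyperplanes:
  fixes q :: "'i \<Rightarrow> 'a::euclidean_space"
  assumes "finite I" and "\<And>i. i \<in> I \<Longrightarrow> q i \<noteq> 0"
  shows "\<exists>w. \<forall>i\<in>I. q i \<bullet> w \<noteq> c i"
proof -
  have "negligible (\<Union>i\<in>I. {w. q i \<bullet> w = c i})"
    using assms by (intro negligible_Union) (auto intro: negligible_hyperplane)
  then have "(\<Union>i\<in>I. {w. q i \<bullet> w = c i}) \<noteq> UNIV"
    by (metis non_negligible_UNIV)
  then show ?thesis by blast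
qed

lemma poch_0 [simp]: "poch z 0 = 1"
  by (simp add: poch_def)

lemma poch_eq_Gamma_ratio:
  assumes "z \<notin> \<int>"
  shows "poch z n = Gamma (z + of_int n) / Gamma z"
proof (cases "n \<ge> 0")
  case True
  then show ?thesis
    using pochhammer_Gamma[of z "nat n"] assms nonpos_Ints_subset_Ints
    by (auto simp: poch_def)
next
  case False
  have "z + of_int n \<notin> \<int>\<^sub>\<le>\<^sub>0"
    using assms nonpos_Ints_subset_Ints by auto
  from pochhammer_Gamma[OF this, of "nat (- n)"] False
  have "pochhammer (z + of_int n) (nat (- n)) = Gamma z / Gamma (z + of_int n)"
    by simp
  with False show ?thesis
    by (simp add: poch_def)
qed

lemma poch_nonzero:
  assumes "z \<notin> \<int>"
  shows "poch z n \<noteq> 0"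
  using assms nonpos_Ints_subset_Ints
  by (auto simp: poch_eq_Gamma_ratio Gamma_eq_zero_iff)

lemma poch_add:
  assumes "z \<notin> \<int>"
  shows "poch z m * poch (z + of_int m) n = poch z (m + n)"
proof -
  have "Gamma (z + of_int m) \<noteq> 0"
    using assms nonpos_Ints_subset_Ints by (auto simp: Gamma_eq_zero_iff)
  with assms show ?thesis
    by (simp add: poch_eq_Gamma_ratio add.assoc)
qed

lemma cvec_add: "cvec (d + d') = cvec d + cvec d'"
  by (simp add: cvec_def vec_eq_iff)

lemma cvec_0 [simp]: "cvec 0 = 0"
  by (simp add: cvec_def vec_eq_iff)

lemma cvec_eq_iff: "cvec d = cvec d' \<longleftrightarrow> d = d'"
  by (simp add: cvec_def vec_eq_iff)

lemma inst_op_apply: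
  "inst_op Q eps lam d F u
     = inst_coeff Q eps lam d (u + lam *s cvec d) * F (u + lam *s cvec d)"
  by (simp add: inst_op_def vector_scalar_mult_def)

lemma Dsym_shift:
  "Dsym Q eps (s + lam *s cvec d) i
     = Dsym Q eps s i + lam * of_int (\<Sum>a\<in>UNIV. d$a * Q$a$i)"
  by (simp add: Dsym_def cvec_def algebra_simps sum.distrib sum_distrib_left)

lemma inst_coeff_cocycle:
  assumes "lam \<noteq> 0" and "generic_exponent Q eps lam s"
  shows "inst_coeff Q eps lam d (s - lam *s cvec d') * inst_coeff Q eps lam d' s
         = inst_coeff Q eps lam (d + d') s"
  unfolding inst_coeff_def prod.distrib[symmetric]
proof (rule prod.cong[OF refl])
  fix i
  define z where "z = Dsym Q eps s i / lam"
  define n where "n = (\<Sum>a\<in>UNIV. d$a * Q$a$i)"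
  define n' where "n' = (\<Sum>a\<in>UNIV. d'$a * Q$a$i)"
  have "Dsym Q eps (s - lam *s cvec d') i = Dsym Q eps s i - lam * of_int n'"
    using Dsym_shift[of Q eps "s - lam *s cvec d'" lam d' i] by (simp add: n'_def)
  with assms(1) have shifted: "Dsym Q eps (s - lam *s cvec d') i / lam = z + of_int (- n')"
    by (simp add: z_def field_simps)
  have "poch (z + of_int (- n')) (- n) * poch z (- n') = poch z (- (n + n'))"
  proof (cases "\<exists>a. Q$a$i \<noteq> 0")
    case True
    with assms(2) have "z \<notin> \<int>"
      by (auto simp: generic_exponent_def z_def elim!: Ints_cases)
    from poch_add[OF this, of "- n'" "- n"] show ?thesis
      by (simp add: algebra_simps)
  next
    case False
    then show ?thesis by (simp add: n_def n'_def)
  qed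
  moreover have "(\<Sum>a\<in>UNIV. (d + d')$a * Q$a$i) = n + n'"
    by (simp add: n_def n'_def algebra_simps sum.distrib)
  ultimately show "poch (Dsym Q eps (s - lam *s cvec d') i / lam) (- n)
                   * poch (Dsym Q eps s i / lam) (- n')
                   = poch (Dsym Q eps s i / lam) (- (\<Sum>a\<in>UNIV. (d + d')$a * Q$a$i))"
    by (simp add: shifted z_def)
qed

lemma inst_op_add:
  assumes "lam \<noteq> 0" and "generic_support Q eps lam F"
  shows "inst_op Q eps lam d (inst_op Q eps lam d' F) = inst_op Q eps lam (d + d') F"
proof
  fix u
  define s where "s = u + lam *s cvec (d + d')"
  have s_eq: "u + lam *s cvec d + lam *s cvec d' = s" "u + lam *s cvec d = s - lam *s cvec d'"
    by (simp_all add: s_def cvec_add vector_add_ldistrib algebra_simps)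
  have "inst_coeff Q eps lam d (s - lam *s cvec d') * inst_coeff Q eps lam d' s * F s
        = inst_coeff Q eps lam (d + d') s * F s"
  proof (cases "F s = 0")
    case False
    with assms(2) have "generic_exponent Q eps lam s"
      by (simp add: generic_support_def)
    then show ?thesis by (simp add: inst_coeff_cocycle[OF assms(1)])
  qed simp
  then show "inst_op Q eps lam d (inst_op Q eps lam d' F) u = inst_op Q eps lam (d + d') F u"
    by (simp add: inst_op_apply s_eq s_def[symmetric] mult.assoc)
qed

lemma inst_op_0: "inst_op Q eps lam 0 = id"
  by (simp add: fun_eq_iff inst_op_apply inst_coeff_def)

lemma ex_inst_coeff_nonzero:
  assumes "lam \<noteq> 0"
  shows "\<exists>s. inst_coeff Q eps lam d s \<noteq> 0"
proof -
  define q where "q i = (\<chi> a. real_of_int (Q$a$i))" for i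
  obtain w where w: "\<forall>i\<in>{i. \<exists>a. Q$a$i \<noteq> 0}. q i \<bullet> w \<noteq> - Im (eps$i / lam)"
    using ex_avoid_hyperplanes[of "{i. \<exists>a. Q$a$i \<noteq> 0}" q]
    by (fastforce simp: q_def vec_eq_iff)
  define s where "s = (\<chi> a. lam * \<i> * of_real (w$a))"
  have "poch (Dsym Q eps s i / lam) (- (\<Sum>a\<in>UNIV. d$a * Q$a$i)) \<noteq> 0" for i
  proof (cases "\<exists>a. Q$a$i \<noteq> 0")
    case True
    have "Dsym Q eps s i / lam = eps$i / lam + \<i> * of_real (q i \<bullet> w)"
      using assms by (simp add: Dsym_def s_def q_def inner_vec_def field_simps sum_distrib_left)
    with w True have "Dsym Q eps s i / lam \<notin> \<int>"
      by (auto simp: complex_is_Int_iff)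
    then show ?thesis by (rule poch_nonzero)
  next
    case False
    then show ?thesis by simp
  qed
  then show ?thesis
    by (auto simp: inst_coeff_def)
qed

lemma inj_inst_op:
  fixes Q :: "int^'n^'r"
  assumes "lam \<noteq> 0"
  shows "inj (inst_op Q eps lam)"
proof (rule injI)
  fix d d' :: "int^'r"
  assume eq: "inst_op Q eps lam d = inst_op Q eps lam d'"
  obtain s where s: "inst_coeff Q eps lam d s \<noteq> 0"
    using ex_inst_coeff_nonzero[OF assms] by blast
  define F where "F t = (if t = s then 1 else (0::complex))" for t
  define u where "u = s - lam *s cvec d"
  have "inst_op Q eps lam d F u \<noteq> 0"
    using s by (simp add: inst_op_apply F_def u_def)
  then have "inst_op Q eps lam d' F u \<noteq> 0"
    by (simp add: eq)
  then have "u + lam *s cvec d' = s"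
    by (auto simp: inst_op_apply F_def split: if_splits)
  then have "lam *s cvec d' = lam *s cvec d"
    by (simp add: u_def algebra_simps)
  with assms have "cvec d = cvec d'"
    by (simp add: vec_eq_iff)
  then show "d = d'"
    by (simp add: cvec_eq_iff)
qed

theorem mainTheorem7:
  fixes Q :: "int^'n^'r" and eps :: "complex^'n" and lam :: complex
    and K :: "(real^'r) set"
  assumes "lam \<noteq> 0" and "chamber Q K"
  shows "(\<forall>d\<in>Lambda K. \<forall>d'\<in>Lambda K. \<forall>F. generic_support Q eps lam F \<longrightarrow>
            inst_op Q eps lam d (inst_op Q eps lam d' F) = inst_op Q eps lam (d + d') F \<and>
            inst_op Q eps lam d (inst_op Q eps lam d' F) = inst_op Q eps lam d' (inst_op Q eps lam d F))
       \<and> inst_op Q eps lam 0 = id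
       \<and> inj_on (inst_op Q eps lam) (Lambda K)"
proof (intro conjI ballI allI impI)
  fix d d' :: "int^'r" and F
  assume "generic_support Q eps lam F"
  note add = inst_op_add[OF \<open>lam \<noteq> 0\<close> this]
  show "inst_op Q eps lam d (inst_op Q eps lam d' F) = inst_op Q eps lam (d + d') F"
    by (rule add)
  show "inst_op Q eps lam d (inst_op Q eps lam d' F) = inst_op Q eps lam d' (inst_op Q eps lam d F)"
    by (simp add: add add.commute)
next
  show "inst_op Q eps lam 0 = id"
    by (rule inst_op_0)
  show "inj_on (inst_op Q eps lam) (Lambda K)"
    using inj_inst_op[OF \<open>lam \<noteq> 0\<close>] by (rule inj_on_subset) simp
qed

end
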